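(* Let $k\in\mathbb{N}$, let $P$ be the uniform distribution on $[0,1]$, and let $\beta=\{\frac jk:1\leq j\leq k\}$. For $1\le j\le k$ let $J_{k,j}=[\frac{j-1}k,\frac jk]$. Let $n\geq k$ and let $\alpha_n$ be a conditional optimal set of $n$-points for $P$ with respect to $\beta$, where $n=mk+\ell$ with $m\in\mathbb{N}$ and $\ell$ an integer with $0\leq\ell<k$. Then: (i) if $\ell=0$, then $\mathrm{card}(\alpha_n\cap J_{k,1})=m$ and $\mathrm{card}(\alpha_n\cap J_{k,j})=m+1$ for $2\leq j\leq k$; (ii) if $1\leq\ell<k$, then $\mathrm{card}(\alpha_n\cap J_{k,1})=m+1$, $\mathrm{card}(\alpha_n\cap J_{k,j})=m+2$ for $j\in\{j_1,\dots,j_{\ell-1}\}$, and $\mathrm{card}(\alpha_n\cap J_{k,j})=m+1$ for $j\in\{2,\dots,k\}\setminus\{j_1,\dots,j_{\ell-1}\}$, where $\{j_1,\dots,j_{\ell-1}\}$ is some subset of $\ell-1$ elements of $\{2,3,\dots,k\}$.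
   Context: Conditional quantization on $\mathbb{R}$: for a Borel probability measure $P$ on $\mathbb{R}$ and a finite set $\beta\subset\mathbb{R}$ with $\mathrm{card}(\beta)=r$, for $n\geq r$ the $n$th conditional quantization error is $V_n=\inf\{\int\min_{a\in\alpha\cup\beta}(x-a)^2\,dP(x):\alpha\subset\mathbb{R},\ \mathrm{card}(\alpha)\leq n-r\}$. A set $\alpha\cup\beta$ attaining this infimum, such that each $b\in\beta$ has a Voronoi region (set of points at least as close to $b$ as to any other point of $\alpha\cup\beta$) of positive $P$-measure, is a conditional optimal set of $n$-points for $P$ with respect to $\beta$; it contains $\beta$. *)

theory Defs
  imports "HOL-Analysis.Analysis"
begin

definition distortion :: "real measure \<Rightarrow> real set \<Rightarrow> real" where
  "distortion P S = (\<integral>x. Min ((\<lambda>a. (x - a)\<^sup>2) ` S) \<partial>P)"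

definition cond_quant_error :: "real measure \<Rightarrow> real set \<Rightarrow> nat \<Rightarrow> real" where
  "cond_quant_error P \<beta> n =
     (INF \<alpha> \<in> {\<alpha>. finite \<alpha> \<and> card \<alpha> \<le> n - card \<beta>}. distortion P (\<alpha> \<union> \<beta>))"

definition voronoi :: "real set \<Rightarrow> real \<Rightarrow> real set" where
  "voronoi S b = {x. \<forall>a\<in>S. \<bar>x - b\<bar> \<le> \<bar>x - a\<bar>}"

definition cond_optimal_set :: "real measure \<Rightarrow> real set \<Rightarrow> nat \<Rightarrow> real set \<Rightarrow> bool" where
  "cond_optimal_set P \<beta> n \<gamma> \<longleftrightarrow>
     card \<beta> \<le> n \<and>
     (\<exists>\<alpha>. finite \<alpha> \<and> card \<alpha> \<le> n - card \<beta> \<and> \<gamma> = \<alpha> \<union> \<beta>) \<and>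
     distortion P \<gamma> = cond_quant_error P \<beta> n \<and>
     (\<forall>b\<in>\<beta>. measure P (voronoi \<gamma> b) > 0)"

definition unif01 :: "real measure" where
  "unif01 = uniform_measure lborel {0..1}"

definition Jkj :: "nat \<Rightarrow> nat \<Rightarrow> real set" where
  "Jkj k j = {(real j - 1) / real k .. real j / real k}"

end

theory Submission
  imports Defs
begin

text \<open>The distortion of a finite set G containing the grid points j/k splits into the integrals
  of the squared distance to G over the k cells. If a cell [u,v] with v in G has N points of G
  in its interior, that integral is at least (v - u)^3/(3 s^2), where s = 2N + 2 if G has a
  point at or left of u and s = 2N + 1 otherwise, with equality for evenly spaced points.
  As the grid points lie in G, s is even in every cell but the first, and counting the points
  of G gives sum s \<le> 2n - 1; conversely every such profile s with odd first entry is realised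
  by an admissible set. So the profile of an optimal set minimises sum 1/s^2 among these
  profiles. Tilting 1/x^2 by its chord slope through the two admissible values next to the mean
  turns this into a termwise minimisation: the first cell gets 2m - 1 or 2m + 1 pieces, every
  other cell 2m or 2m + 2, and the number of pieces of a cell determines the number of points
  of G in it.\<close>

section \<open>Squared distance to a finite set\<close>

definition nearest_sqdist :: "real set \<Rightarrow> real \<Rightarrow> real" where
  "nearest_sqdist T x = Min ((\<lambda>a. (x - a)\<^sup>2) ` T)"

lemma continuous_on_nearest_sqdist:
  assumes "finite T" "T \<noteq> {}"
  shows "continuous_on UNIV (nearest_sqdist T)"
  using assms
proof (induction T rule: finite_ne_induct)
  case (singleton a)
  then show ?case by (simp add: nearest_sqdist_def continuous_intros)
next
  case (insert a T)
  have "nearest_sqdist (insert a T) = (\<lambda>x. min ((x - a)\<^sup>2) (nearest_sqdist T x))"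
    using insert by (auto simp: nearest_sqdist_def fun_eq_iff)
  then show ?case using insert by (auto intro!: continuous_intros)
qed

lemma nearest_sqdist_integrable:
  assumes "finite T" "T \<noteq> {}"
  shows "nearest_sqdist T integrable_on {u..v}"
  by (rule integrable_continuous_interval)
     (rule continuous_on_subset[OF continuous_on_nearest_sqdist[OF assms]], simp)

lemma nearest_sqdist_le: "finite T \<Longrightarrow> a \<in> T \<Longrightarrow> nearest_sqdist T x \<le> (x - a)\<^sup>2"
  unfolding nearest_sqdist_def by (rule Min_le) auto

lemma le_nearest_sqdist:
  "finite T \<Longrightarrow> T \<noteq> {} \<Longrightarrow> (\<And>a. a \<in> T \<Longrightarrow> c \<le> (x - a)\<^sup>2)
    \<Longrightarrow> c \<le> nearest_sqdist T x"
  unfolding nearest_sqdist_def by (subst Min_ge_iff) auto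

lemma nearest_sqdist_nonneg: "finite T \<Longrightarrow> T \<noteq> {} \<Longrightarrow> 0 \<le> nearest_sqdist T x"
  by (rule le_nearest_sqdist) auto

lemma integral_unif01:
  fixes f :: "real \<Rightarrow> real"
  assumes "continuous_on UNIV f"
  shows "(\<integral>x. f x \<partial>unif01) = integral {0..1} f"
proof -
  have f_borel: "f \<in> borel_measurable lborel"
    using assms by (simp add: borel_measurable_continuous_onI)
  have unif01_density: "unif01 = density lborel (\<lambda>x. ennreal (indicator {0..1::real} x))"
    unfolding unif01_def uniform_measure_def
    by simp (intro arg_cong[where f="density lborel"], auto simp: fun_eq_iff split: split_indicator)
  have "(\<integral>x. f x \<partial>unif01) = (\<integral>x. indicator {0..1} x *\<^sub>R f x \<partial>lborel)"
    unfolding unif01_density by (subst integral_density) (use f_borel in auto)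
  also have "\<dots> = (LINT x : {0..1} | lborel. f x)"
    by (simp add: set_lebesgue_integral_def)
  also have "\<dots> = integral {0..1} f"
    by (rule set_borel_integral_eq_integral, unfold set_integrable_def,
        rule borel_integrable_compact) (auto intro: continuous_on_subset[OF assms])
  finally show ?thesis .
qed

lemma distortion_unif01:
  "finite T \<Longrightarrow> T \<noteq> {} \<Longrightarrow> distortion unif01 T = integral {0..1} (nearest_sqdist T)"
  unfolding distortion_def
  using integral_unif01[OF continuous_on_nearest_sqdist] by (simp add: nearest_sqdist_def)

lemma integral_uniform_partition:
  fixes f :: "real \<Rightarrow> real"
  assumes "0 \<le> \<eta>" and "\<And>a b. f integrable_on {a..b}"
  shows "integral {u..u + real N * \<eta>} f
    = (\<Sum>i<N. integral {u + real i * \<eta>..u + real (Suc i) * \<eta>} f)"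
proof (induction N)
  case (Suc N)
  have "integral {u..u + real (Suc N) * \<eta>} f
      = integral {u..u + real N * \<eta>} f
        + integral {u + real N * \<eta>..u + real (Suc N) * \<eta>} f"
    by (rule Henstock_Kurzweil_Integration.integral_combine[symmetric])
       (use assms in \<open>auto simp: mult_right_mono\<close>)
  then show ?case using Suc by simp
qed simp

lemma integral_sqdist_left:
  fixes u w :: real
  assumes "u \<le> w"
  shows "integral {u..w} (\<lambda>x. (x - u)\<^sup>2) = (w - u)^3 / 3"
proof -
  have "((\<lambda>x. (x - u)\<^sup>2) has_integral ((w - u)^3/3 - (u - u)^3/3)) {u..w}"
    by (rule fundamental_theorem_of_calculus[OF assms])
       (auto simp: has_real_derivative_iff_has_vector_derivative[symmetric] power2_eq_square
             intro!: derivative_eq_intros)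
  then show ?thesis by (simp add: integral_unique)
qed

lemma integral_sqdist_right:
  fixes u w :: real
  assumes "u \<le> w"
  shows "integral {u..w} (\<lambda>x. (w - x)\<^sup>2) = (w - u)^3 / 3"
proof -
  have "((\<lambda>x. (w - x)\<^sup>2) has_integral ((w - w)^3/3 - (u - w)^3/3)) {u..w}"
    by (rule fundamental_theorem_of_calculus[OF assms, of "\<lambda>x. (x - w)^3/3"])
       (auto simp: has_real_derivative_iff_has_vector_derivative[symmetric] power2_eq_square
             field_simps intro!: derivative_eq_intros)
  then show ?thesis by (simp add: integral_unique power3_eq_cube field_simps)
qed

text \<open>Twice the number of gaps into which the points of T cut [u,v], minus one if no point of T
  lies at or left of u (the first gap then has only one end in T).\<close>
definition cell_pieces :: "real set \<Rightarrow> real \<Rightarrow> real \<Rightarrow> nat" where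
  "cell_pieces T u v = 2 * card (T \<inter> {u<..<v}) + (if \<exists>a\<in>T. a \<le> u then 2 else 1)"

lemma integral_nearest_sqdist_ge_right:
  assumes T: "finite T" "v \<in> T" and "u \<le> v" and right: "\<And>a. a \<in> T \<Longrightarrow> v \<le> a"
  shows "(v - u)^3 / 3 \<le> integral {u..v} (nearest_sqdist T)"
proof -
  have "(v - x)\<^sup>2 \<le> nearest_sqdist T x" if "x \<le> v" for x
  proof (rule le_nearest_sqdist[OF T(1)])
    show "T \<noteq> {}" using T by auto
    fix a assume "a \<in> T"
    then have "(v - x)\<^sup>2 \<le> (a - x)\<^sup>2" using that right by (intro power_mono) auto
    then show "(v - x)\<^sup>2 \<le> (x - a)\<^sup>2" by (simp add: power2_commute)
  qed
  then have "integral {u..v} (\<lambda>x. (v - x)\<^sup>2) \<le> integral {u..v} (nearest_sqdist T)"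
    using T by (intro integral_le nearest_sqdist_integrable integrable_continuous_interval
        continuous_intros) auto
  then show ?thesis using integral_sqdist_right[OF \<open>u \<le> v\<close>] by simp
qed

lemma integral_nearest_sqdist_ge_two_sided:
  assumes T: "finite T" "a\<^sub>0 \<in> T" "a\<^sub>0 \<le> u" "v \<in> T" and "u \<le> v"
    and gap: "\<And>a. a \<in> T \<Longrightarrow> a \<le> u \<or> v \<le> a"
  shows "(v - u)^3 / 12 \<le> integral {u..v} (nearest_sqdist T)"
proof -
  define w where "w = (u + v) / 2"
  have uw: "u \<le> w" and wv: "w \<le> v" using \<open>u \<le> v\<close> by (auto simp: w_def)
  have ne: "T \<noteq> {}" using T by auto
  have pointwise: "min (x - u) (v - x) ^ 2 \<le> nearest_sqdist T x" if "x \<in> {u..v}" for x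
  proof (rule le_nearest_sqdist[OF T(1) ne])
    fix a assume "a \<in> T"
    then have "min (x - u) (v - x) \<le> \<bar>x - a\<bar>" using gap that by force
    then have "min (x - u) (v - x) ^ 2 \<le> \<bar>x - a\<bar> ^ 2" using that by (intro power_mono) auto
    then show "min (x - u) (v - x) ^ 2 \<le> (x - a)\<^sup>2" by simp
  qed
  have left: "integral {u..w} (\<lambda>x. (x - u)\<^sup>2) \<le> integral {u..w} (nearest_sqdist T)"
  proof (intro integral_le nearest_sqdist_integrable[OF T(1) ne] integrable_continuous_interval
      continuous_intros)
    fix x assume x: "x \<in> {u..w}"
    then have "min (x - u) (v - x) = x - u" by (intro min_absorb1) (simp add: w_def)
    with pointwise[of x] x wv show "(x - u)\<^sup>2 \<le> nearest_sqdist T x" by simp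
  qed
  have right: "integral {w..v} (\<lambda>x. (v - x)\<^sup>2) \<le> integral {w..v} (nearest_sqdist T)"
  proof (intro integral_le nearest_sqdist_integrable[OF T(1) ne] integrable_continuous_interval
      continuous_intros)
    fix x assume x: "x \<in> {w..v}"
    then have "min (x - u) (v - x) = v - x" by (intro min_absorb2) (simp add: w_def)
    with pointwise[of x] x uw show "(v - x)\<^sup>2 \<le> nearest_sqdist T x" by simp
  qed
  have "integral {u..v} (nearest_sqdist T)
      = integral {u..w} (nearest_sqdist T) + integral {w..v} (nearest_sqdist T)"
    by (rule Henstock_Kurzweil_Integration.integral_combine[symmetric, OF uw wv
          nearest_sqdist_integrable[OF T(1) ne]])
  moreover have "(w - u)^3 / 3 + (v - w)^3 / 3 = (v - u)^3 / 12"
    by (simp add: w_def power3_eq_cube field_simps)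
  ultimately show ?thesis
    using left right integral_sqdist_left[OF uw] integral_sqdist_right[OF wv] by linarith
qed

lemma integral_nearest_sqdist_empty_cell_ge:
  assumes T: "finite T" "v \<in> T" and "u \<le> v" and empty: "T \<inter> {u<..<v} = {}"
  shows "(v - u)^3 / (3 * real (cell_pieces T u v)^2) \<le> integral {u..v} (nearest_sqdist T)"
proof -
  have gap: "a \<le> u \<or> v \<le> a" if "a \<in> T" for a
    using empty that by fastforce
  show ?thesis
  proof (cases "\<exists>a\<in>T. a \<le> u")
    case True
    then obtain a\<^sub>0 where "a\<^sub>0 \<in> T" "a\<^sub>0 \<le> u" by blast
    with integral_nearest_sqdist_ge_two_sided[OF T(1) this T(2) \<open>u \<le> v\<close> gap] True empty
    show ?thesis by (simp add: cell_pieces_def)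
  next
    case False
    then have "v \<le> a" if "a \<in> T" for a using gap[OF that] that by force
    with integral_nearest_sqdist_ge_right[OF T \<open>u \<le> v\<close>] False empty
    show ?thesis by (simp add: cell_pieces_def)
  qed
qed

lemma cube_div_square_add_le:
  fixes x y p q :: real
  assumes "0 \<le> x" "0 \<le> y" "0 < p" "0 < q"
  shows "(x + y)^3 / (p + q)^2 \<le> x^3 / p^2 + y^3 / q^2"
proof -
  define X Y where "X = x / p" and "Y = y / q"
  have x: "x = p * X" and y: "y = q * Y" and "0 \<le> X" "0 \<le> Y"
    using assms by (auto simp: X_def Y_def)
  have "(p+q)^2 * (p*X^3 + q*Y^3) - (p*X + q*Y)^3 = p*q*(X-Y)^2*((2*p+q)*X + (p+2*q)*Y)"
    by (simp add: power2_eq_square power3_eq_cube algebra_simps)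
  moreover have "0 \<le> p*q*(X-Y)^2*((2*p+q)*X + (p+2*q)*Y)"
    using assms \<open>0 \<le> X\<close> \<open>0 \<le> Y\<close> by (intro mult_nonneg_nonneg) auto
  ultimately have "(p*X + q*Y)^3 / (p+q)^2 \<le> p*X^3 + q*Y^3"
    using assms by (simp add: divide_simps mult.commute)
  moreover have "x^3 / p^2 = p * X^3" "y^3 / q^2 = q * Y^3"
    using assms by (auto simp: x y power2_eq_square power3_eq_cube field_simps)
  ultimately show ?thesis by (simp add: x y)
qed

lemma integral_nearest_sqdist_cell_ge_extend:
  assumes T: "finite T" "t \<in> T" "v \<in> T" and "u < t" "t < v" and empty: "T \<inter> {t<..<v} = {}"
    and left: "(t - u)^3 / (3 * real (cell_pieces T u t)^2) \<le> integral {u..t} (nearest_sqdist T)"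
  shows "(v - u)^3 / (3 * real (cell_pieces T u v)^2) \<le> integral {u..v} (nearest_sqdist T)"
proof -
  define p where "p = cell_pieces T u t"
  have "T \<inter> {u<..<v} = insert t (T \<inter> {u<..<t})"
    using T(2) \<open>u < t\<close> \<open>t < v\<close> empty by auto
  then have pieces: "cell_pieces T u v = p + 2"
    using T(1) by (simp add: cell_pieces_def p_def)
  have pieces_right: "cell_pieces T t v = 2"
    using empty T(2) by (auto simp: cell_pieces_def)
  have "real p \<ge> 1" by (simp add: p_def cell_pieces_def)
  then have radon: "(v - u)^3 / real (p + 2)^2 \<le> (t - u)^3 / real p^2 + (v - t)^3 / real 2^2"
    using cube_div_square_add_le[of "t - u" "v - t" "real p" 2] \<open>u < t\<close> \<open>t < v\<close>
    by (simp add: add.commute)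
  have "(v - u)^3 / (3 * real (cell_pieces T u v)^2) = (v - u)^3 / real (p + 2)^2 / 3"
    unfolding pieces by simp
  also have "\<dots> \<le> ((t - u)^3 / real p^2 + (v - t)^3 / real 2^2) / 3"
    using radon by (rule divide_right_mono) simp
  also have "\<dots> = (t - u)^3 / (3 * real (cell_pieces T u t)^2)
      + (v - t)^3 / (3 * real (cell_pieces T t v)^2)"
    unfolding pieces_right p_def by (simp add: field_simps)
  also have "\<dots> \<le> integral {u..t} (nearest_sqdist T) + integral {t..v} (nearest_sqdist T)"
    using left integral_nearest_sqdist_empty_cell_ge[OF T(1,3) _ empty] \<open>t < v\<close>
    by (intro add_mono) auto
  also have "\<dots> = integral {u..v} (nearest_sqdist T)"
    using \<open>u < t\<close> \<open>t < v\<close> T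
    by (intro Henstock_Kurzweil_Integration.integral_combine nearest_sqdist_integrable) auto
  finally show ?thesis .
qed

lemma integral_nearest_sqdist_cell_ge:
  assumes T: "finite T" "v \<in> T" and "u \<le> v"
  shows "(v - u)^3 / (3 * real (cell_pieces T u v)^2) \<le> integral {u..v} (nearest_sqdist T)"
proof -
  have "card (T \<inter> {u<..<v}) = N \<Longrightarrow> ?thesis" for N
    using T(2) \<open>u \<le> v\<close>
  proof (induction N arbitrary: v)
    case 0
    then show ?case using T(1) by (intro integral_nearest_sqdist_empty_cell_ge) auto
  next
    case (Suc N)
    define S where "S = T \<inter> {u<..<v}"
    have "finite S" "S \<noteq> {}" using T(1) Suc.prems(1) by (auto simp: S_def)
    define t where "t = Max S"
    have "t \<in> S" using \<open>finite S\<close> \<open>S \<noteq> {}\<close> by (simp add: t_def)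
    then have "t \<in> T" "u < t" "t < v" by (auto simp: S_def)
    have t_max: "a \<le> t" if "a \<in> S" for a using \<open>finite S\<close> that by (simp add: t_def)
    have "T \<inter> {u<..<t} = S - {t}" using t_max \<open>t < v\<close> by (force simp: S_def)
    then have card_left: "card (T \<inter> {u<..<t}) = N"
      using Suc.prems(1) \<open>t \<in> S\<close> \<open>finite S\<close> by (simp add: S_def)
    have "T \<inter> {t<..<v} = {}" using t_max \<open>u < t\<close> by (force simp: S_def)
    with Suc.IH[OF card_left \<open>t \<in> T\<close>] \<open>u < t\<close> show ?case
      by (intro integral_nearest_sqdist_cell_ge_extend[OF T(1) \<open>t \<in> T\<close> Suc.prems(2)
          \<open>u < t\<close> \<open>t < v\<close>]) auto
  qed
  then show ?thesis by blast
qed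

lemma integral_nearest_sqdist_le:
  assumes T: "finite T" and "p \<le> q" and "p \<in> T \<or> q \<in> T"
  shows "integral {p..q} (nearest_sqdist T) \<le> (q - p)^3 / 3"
  using \<open>p \<in> T \<or> q \<in> T\<close>
proof
  assume "p \<in> T"
  then have "integral {p..q} (nearest_sqdist T) \<le> integral {p..q} (\<lambda>x. (x - p)\<^sup>2)"
    using T by (intro integral_le nearest_sqdist_integrable integrable_continuous_interval
        continuous_intros nearest_sqdist_le) auto
  then show ?thesis using integral_sqdist_left[OF \<open>p \<le> q\<close>] by simp
next
  assume "q \<in> T"
  then have "integral {p..q} (nearest_sqdist T) \<le> integral {p..q} (\<lambda>x. (q - x)\<^sup>2)"
    using T nearest_sqdist_le[OF T \<open>q \<in> T\<close>]
    by (intro integral_le nearest_sqdist_integrable integrable_continuous_interval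
        continuous_intros) (auto simp: power2_commute)
  then show ?thesis using integral_sqdist_right[OF \<open>p \<le> q\<close>] by simp
qed

lemma integral_nearest_sqdist_partition_le:
  assumes T: "finite T" "T \<noteq> {}" and "0 \<le> \<eta>"
    and covered: "\<And>i. i < N \<Longrightarrow> u + real i * \<eta> \<in> T \<or> u + real (Suc i) * \<eta> \<in> T"
  shows "integral {u..u + real N * \<eta>} (nearest_sqdist T) \<le> real N * \<eta>^3 / 3"
proof -
  have "integral {u..u + real N * \<eta>} (nearest_sqdist T)
      = (\<Sum>i<N. integral {u + real i * \<eta>..u + real (Suc i) * \<eta>} (nearest_sqdist T))"
    by (rule integral_uniform_partition[OF \<open>0 \<le> \<eta>\<close> nearest_sqdist_integrable[OF T]])
  also have "\<dots> \<le> (\<Sum>i<N. \<eta>^3 / 3)"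
    using integral_nearest_sqdist_le[OF T(1) _ covered] \<open>0 \<le> \<eta>\<close>
    by (intro sum_mono) (simp add: algebra_simps)
  finally show ?thesis by simp
qed

section \<open>The grid and its cells\<close>

definition grid :: "nat \<Rightarrow> real set" where
  "grid k = {real j / real k | j. 1 \<le> j \<and> j \<le> k}"

lemma grid_eq_image: "grid k = (\<lambda>j. real j / real k) ` {1..k}"
  by (auto simp: grid_def)

lemma finite_grid: "finite (grid k)"
  by (simp add: grid_eq_image)

lemma card_grid: "card (grid k) = k"
  by (cases "k = 0") (auto simp: grid_eq_image card_image inj_on_def)

lemma in_grid: "1 \<le> j \<Longrightarrow> j \<le> k \<Longrightarrow> real j / real k \<in> grid k"
  by (auto simp: grid_def)

text \<open>Cell j is the interval Jkj k (Suc j).\<close>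
definition grid_pieces :: "real set \<Rightarrow> nat \<Rightarrow> nat \<Rightarrow> nat" where
  "grid_pieces G k j = cell_pieces G (real j / real k) (real (Suc j) / real k)"

lemma distortion_unif01_eq_sum_cells:
  assumes "finite T" "T \<noteq> {}" "1 \<le> k"
  shows "distortion unif01 T
    = (\<Sum>j<k. integral {real j / real k..real (Suc j) / real k} (nearest_sqdist T))"
  using integral_uniform_partition[of "1 / real k" "nearest_sqdist T" 0 k]
    nearest_sqdist_integrable[OF assms(1,2)] assms
  by (simp add: distortion_unif01)

lemma distortion_unif01_ge_grid_pieces:
  assumes "1 \<le> k" "finite G" "grid k \<subseteq> G"
  shows "(\<Sum>j<k. 1 / real (grid_pieces G k j)^2) / (3 * real k^3) \<le> distortion unif01 G"
proof -
  have "G \<noteq> {}" using assms in_grid[of k k] by auto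
  have cell_width: "real (Suc j) / real k - real j / real k = 1 / real k" for j
    by (simp add: diff_divide_distrib[symmetric])
  have "(\<Sum>j<k. 1 / real (grid_pieces G k j)^2) / (3 * real k^3)
      = (\<Sum>j<k. (real (Suc j) / real k - real j / real k)^3 / (3 * real (grid_pieces G k j)^2))"
    unfolding cell_width by (simp add: sum_divide_distrib power_divide mult_ac)
  also have "\<dots> \<le> (\<Sum>j<k. integral {real j / real k..real (Suc j) / real k} (nearest_sqdist G))"
    unfolding grid_pieces_def
    using assms in_grid[of "Suc _" k]
    by (intro sum_mono integral_nearest_sqdist_cell_ge) (auto simp: divide_right_mono)
  also have "\<dots> = distortion unif01 G"
    using distortion_unif01_eq_sum_cells[OF assms(2) \<open>G \<noteq> {}\<close> assms(1)] by simp
  finally show ?thesis .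
qed

lemma grid_point_less_iff: "0 < k \<Longrightarrow> real i / real k < real j / real k \<longleftrightarrow> i < j"
  by (simp add: divide_less_cancel)

lemma card_grid_and_cells_le:
  assumes "1 \<le> k" "finite G" "grid k \<subseteq> G"
  shows "k + (\<Sum>j<k. card (G \<inter> {real j / real k<..<real (Suc j) / real k})) + card (G \<inter> {..0})
    \<le> card G"
proof -
  define cell where "cell j = G \<inter> {real j / real k<..<real (Suc j) / real k}" for j
  have "finite (cell j)" for j using assms by (simp add: cell_def)
  have cells_disjoint: "cell i \<inter> cell j = {}" if "i < j" for i j
  proof -
    have "real (Suc i) / real k \<le> real j / real k"
      using that by (intro divide_right_mono) auto
    then show ?thesis by (auto simp: cell_def)
  qed
  have "card (\<Union>j<k. cell j) = (\<Sum>j<k. card (cell j))"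
    using cells_disjoint \<open>\<And>j. finite (cell j)\<close>
    by (intro card_UN_disjoint) (auto simp: Int_commute neq_iff)
  moreover have "grid k \<inter> (\<Union>j<k. cell j) = {}"
    using \<open>1 \<le> k\<close> by (auto simp: grid_def cell_def grid_point_less_iff simp del: of_nat_Suc)
  moreover have "(grid k \<union> (\<Union>j<k. cell j)) \<inter> (G \<inter> {..0}) = {}"
  proof -
    have "0 < x" if "x \<in> grid k" for x using that \<open>1 \<le> k\<close> by (auto simp: grid_def)
    moreover have "0 < x" if "x \<in> cell j" for x j
      using that le_less_trans[of 0 "real j / real k" x] by (simp add: cell_def)
    ultimately show ?thesis by fastforce
  qed
  ultimately have "card (grid k \<union> (\<Union>j<k. cell j) \<union> (G \<inter> {..0}))
      = k + (\<Sum>j<k. card (cell j)) + card (G \<inter> {..0})"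
    using assms \<open>\<And>j. finite (cell j)\<close> by (simp add: card_Un_disjoint finite_grid card_grid)
  moreover have "card (grid k \<union> (\<Union>j<k. cell j) \<union> (G \<inter> {..0})) \<le> card G"
    using assms by (intro card_mono) (auto simp: cell_def)
  ultimately show ?thesis by (simp add: cell_def)
qed

lemma sum_lessThan_split_first:
  "1 \<le> (k::nat) \<Longrightarrow> (\<Sum>j<k. f j) = f 0 + (\<Sum>j\<in>{1..<k}. f j)"
  by (simp add: lessThan_atLeast0 sum.atLeast_Suc_lessThan)

lemma sum_grid_pieces_less:
  assumes "1 \<le> k" "finite G" "grid k \<subseteq> G"
  shows "(\<Sum>j<k. grid_pieces G k j) < 2 * card G"
proof -
  define b where "b j = card (G \<inter> {real j / real k<..<real (Suc j) / real k})" for j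
  define e where "e = card (G \<inter> {..0})"
  define c :: "nat \<Rightarrow> nat"
    where "c j = (if \<exists>a\<in>G. a \<le> real j / real k then 2 else 1)" for j
  have pieces: "grid_pieces G k j = 2 * b j + c j" for j
    by (simp add: grid_pieces_def cell_pieces_def b_def c_def)
  have "c 0 \<le> 1 + 2 * e"
  proof (cases "\<exists>a\<in>G. a \<le> 0")
    case True
    then have "e \<noteq> 0" using \<open>finite G\<close> by (auto simp: e_def)
    then show ?thesis by (simp add: c_def)
  qed (simp add: c_def)
  moreover have "(\<Sum>j\<in>{1..<k}. c j) \<le> (\<Sum>j\<in>{1..<k}. 2)"
    by (intro sum_mono) (simp add: c_def)
  ultimately have "(\<Sum>j<k. c j) < 2 * k + 2 * e"
    using sum_lessThan_split_first[OF \<open>1 \<le> k\<close>, of c] \<open>1 \<le> k\<close> by simp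
  moreover have "k + (\<Sum>j<k. b j) + e \<le> card G"
    using card_grid_and_cells_le[OF assms] by (simp add: b_def e_def)
  ultimately show ?thesis by (simp add: pieces sum.distrib sum_distrib_left[symmetric])
qed

lemma cond_quant_error_unif01_le:
  assumes "finite \<alpha>" "card \<alpha> \<le> n - card \<beta>" "finite \<beta>" "\<beta> \<noteq> {}"
  shows "cond_quant_error unif01 \<beta> n \<le> distortion unif01 (\<alpha> \<union> \<beta>)"
proof -
  have "0 \<le> distortion unif01 (\<alpha>' \<union> \<beta>)" if "finite \<alpha>'" for \<alpha>'
    using that assms by (simp add: distortion_unif01 integral_nonneg nearest_sqdist_integrable
        nearest_sqdist_nonneg)
  then show ?thesis
    unfolding cond_quant_error_def using assms
    by (intro cInf_lower bdd_belowI[where m=0]) auto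
qed

definition grid_subpoint :: "nat \<Rightarrow> (nat \<Rightarrow> nat) \<Rightarrow> nat \<Rightarrow> nat \<Rightarrow> real" where
  "grid_subpoint k s j i = real j / real k + real i / (real k * real (s j))"

text \<open>Cell j is cut into s j equal pieces, and the added points are the inner cut points whose
  index has the parity of s j.\<close>
definition added_points :: "nat \<Rightarrow> (nat \<Rightarrow> nat) \<Rightarrow> real set" where
  "added_points k s = (\<lambda>(j, p). grid_subpoint k s j (s j - 2 * p - 2))
    ` (SIGMA j:{..<k}. {..<(s j - 1) div 2})"

lemma grid_subpoint_last: "0 < s j \<Longrightarrow> grid_subpoint k s j (s j) = real (Suc j) / real k"
  by (simp add: grid_subpoint_def add_divide_distrib)

lemma card_added_points_le:
  assumes "1 \<le> k" "odd (s 0)" "\<And>j. j \<in> {1..<k} \<Longrightarrow> even (s j) \<and> 0 < s j"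
    and "(\<Sum>j<k. s j) < 2 * n"
  shows "card (added_points k s) \<le> n - k"
proof -
  have halves: "2 * ((s j - 1) div 2) + 2 = s j + (if j = 0 then 1 else 0)" if "j < k" for j
  proof (cases "j = 0")
    case False
    then have "even (s j)" "0 < s j" using assms(3) that by auto
    then show ?thesis using False by presburger
  qed (use assms(2) in presburger)
  have "2 * (\<Sum>j<k. (s j - 1) div 2) + 2 * k = (\<Sum>j<k. 2 * ((s j - 1) div 2) + 2)"
    by (simp only: sum.distrib sum_distrib_left) simp
  also have "\<dots> = (\<Sum>j<k. s j + (if j = 0 then 1 else 0))"
    using halves by (intro sum.cong) auto
  also have "\<dots> = (\<Sum>j<k. s j) + 1"
    using assms(1) by (simp add: sum.distrib)
  finally have "(\<Sum>j<k. (s j - 1) div 2) \<le> n - k" using assms(4) by simp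
  moreover have "card (added_points k s) \<le> (\<Sum>j<k. (s j - 1) div 2)"
    unfolding added_points_def
    by (rule card_image_le[THEN order_trans]) (simp_all add: card_SigmaI)
  ultimately show ?thesis by simp
qed

lemma grid_subpoint_covered:
  assumes "odd (s 0)" "\<And>j. j \<in> {1..<k} \<Longrightarrow> even (s j) \<and> 0 < s j" "j < k" "i < s j"
  shows "grid_subpoint k s j i \<in> added_points k s \<union> grid k
    \<or> grid_subpoint k s j (Suc i) \<in> added_points k s \<union> grid k"
proof -
  obtain e where e: "e = i \<or> e = Suc i" "e \<le> s j" "even (s j - e)"
  proof (cases "even (s j - i)")
    case False
    then have "even (s j - Suc i)" using \<open>i < s j\<close> by presburger
    then show ?thesis using that[of "Suc i"] \<open>i < s j\<close> by simp
  qed (use that[of i] \<open>i < s j\<close> in simp)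
  consider "e = s j" | "e = 0" | "0 < e" "e < s j" using e(2) by linarith
  then have "grid_subpoint k s j e \<in> added_points k s \<union> grid k"
  proof cases
    case 1
    then show ?thesis
      using grid_subpoint_last[of s j k] assms(3,4) in_grid[of "Suc j" k] by simp
  next
    case 2
    then have "j \<noteq> 0" using e(3) assms(1) by (metis diff_zero)
    then show ?thesis using 2 assms(3) in_grid[of j k] by (simp add: grid_subpoint_def)
  next
    case 3
    obtain q where "s j - e = 2 * q" using e(3) by (elim evenE)
    then have "e = s j - 2 * (q - 1) - 2" "q - 1 < (s j - 1) div 2"
      using 3 by auto
    then show ?thesis using assms(3) by (auto simp: added_points_def)
  qed
  then show ?thesis using e(1) by auto
qed

lemma cond_quant_error_unif01_grid_le:
  assumes k: "1 \<le> k" "k \<le> n"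
    and s: "odd (s 0)" "\<And>j. j \<in> {1..<k} \<Longrightarrow> even (s j) \<and> 0 < s j"
    and sum_s: "(\<Sum>j<k. s j) < 2 * n"
  shows "cond_quant_error unif01 (grid k) n \<le> (\<Sum>j<k. 1 / real (s j)^2) / (3 * real k^3)"
proof -
  define T where "T = added_points k s \<union> grid k"
  have s_pos: "0 < s j" if "j < k" for j
    using s that by (cases "j = 0") (auto intro: odd_pos)
  have "finite (added_points k s)" by (simp add: added_points_def)
  then have "T \<noteq> {}" "finite T"
    using in_grid[of k k] k by (auto simp: T_def finite_grid)
  have cell: "integral {real j / real k..real (Suc j) / real k} (nearest_sqdist T)
      \<le> 1 / real (s j)^2 / (3 * real k^3)" if "j < k" for j
  proof -
    define \<eta> where "\<eta> = 1 / (real k * real (s j))"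
    have "integral {real j / real k..real j / real k + real (s j) * \<eta>} (nearest_sqdist T)
        \<le> real (s j) * \<eta> ^ 3 / 3"
      using grid_subpoint_covered[where s = s, OF s that] \<open>finite T\<close> \<open>T \<noteq> {}\<close>
      by (intro integral_nearest_sqdist_partition_le) (auto simp: T_def grid_subpoint_def \<eta>_def)
    moreover have "real j / real k + real (s j) * \<eta> = real (Suc j) / real k"
      using grid_subpoint_last[of s j k] s_pos[OF that] by (simp add: grid_subpoint_def \<eta>_def)
    moreover have "real (s j) * \<eta> ^ 3 / 3 = 1 / real (s j)^2 / (3 * real k^3)"
      using s_pos[OF that] by (simp add: \<eta>_def power2_eq_square power3_eq_cube)
    ultimately show ?thesis by simp
  qed
  have "cond_quant_error unif01 (grid k) n \<le> distortion unif01 T"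
    unfolding T_def
    using card_added_points_le[where s = s, OF k(1) s sum_s] \<open>finite (added_points k s)\<close>
      in_grid[of k k] k
    by (intro cond_quant_error_unif01_le) (auto simp: card_grid finite_grid)
  also have "\<dots> = (\<Sum>j<k. integral {real j / real k..real (Suc j) / real k} (nearest_sqdist T))"
    using distortion_unif01_eq_sum_cells[OF \<open>finite T\<close> \<open>T \<noteq> {}\<close> k(1)] .
  also have "\<dots> \<le> (\<Sum>j<k. 1 / real (s j)^2 / (3 * real k^3))"
    using cell by (intro sum_mono) auto
  finally show ?thesis by (simp add: sum_divide_distrib)
qed

section \<open>Minimising sums of inverse squares\<close>

lemma penalized_sum_le_imp_eq:
  fixes f g x y :: "'i \<Rightarrow> real"
  assumes "finite I" "\<mu> < 0" "\<forall>i\<in>I. g i \<le> f i" "sum x I \<le> sum y I"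
    and "(\<Sum>i\<in>I. f i + \<mu> * x i) \<le> (\<Sum>i\<in>I. g i + \<mu> * y i)"
  shows "\<forall>i\<in>I. f i = g i" and "sum x I = sum y I"
proof -
  have "sum g I \<le> sum f I" using assms(3) by (simp add: sum_mono)
  moreover have "\<mu> * sum y I \<le> \<mu> * sum x I" using assms(2,4) by (simp add: mult_left_mono_neg)
  moreover have "sum f I + \<mu> * sum x I \<le> sum g I + \<mu> * sum y I"
    using assms(5) by (simp add: sum.distrib sum_distrib_left)
  ultimately have "sum f I = sum g I" "\<mu> * sum x I = \<mu> * sum y I" by linarith+
  then show "sum x I = sum y I" using assms(2) by simp
  have "(\<Sum>i\<in>I. f i - g i) = 0" using \<open>sum f I = sum g I\<close> by (simp add: sum_subtractf)
  then show "\<forall>i\<in>I. f i = g i"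
    using assms(1,3) sum_nonneg_eq_0_iff[of I "\<lambda>i. f i - g i"] by simp
qed

text \<open>Tilting each term 1/(s j)^2 by inv_sq_slope a b * s j changes the sum only by a multiple
  of the sum of the s j; the tilted function takes equal values at a and b and, by convexity,
  larger ones outside [a,b].\<close>
definition inv_sq_slope :: "real \<Rightarrow> real \<Rightarrow> real" where
  "inv_sq_slope a b = (1 / b^2 - 1 / a^2) / (b - a)"

definition inv_sq_tilted :: "real \<Rightarrow> real \<Rightarrow> real \<Rightarrow> real" where
  "inv_sq_tilted a b x = 1 / x^2 - inv_sq_slope a b * x"

lemma inv_sq_slope_neg: "0 < a \<Longrightarrow> a < b \<Longrightarrow> inv_sq_slope a b < 0"
  by (simp add: inv_sq_slope_def divide_neg_pos frac_less2 power_strict_mono)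

lemma inv_sq_slope_eq:
  "0 < a \<Longrightarrow> 0 < b \<Longrightarrow> a \<noteq> b \<Longrightarrow> inv_sq_slope a b = - (a + b) / (a^2 * b^2)"
  by (simp add: inv_sq_slope_def field_simps power2_eq_square)

lemma inv_sq_tilted_right_eq_left: "a \<noteq> b \<Longrightarrow> inv_sq_tilted a b b = inv_sq_tilted a b a"
proof -
  assume "a \<noteq> b"
  then have "inv_sq_slope a b * (b - a) = 1 / b^2 - 1 / a^2" by (simp add: inv_sq_slope_def)
  then show ?thesis by (simp add: inv_sq_tilted_def algebra_simps)
qed

lemma inv_sq_tilted_diff:
  assumes "0 < a" "a < b" "x \<noteq> 0"
  shows "inv_sq_tilted a b x - inv_sq_tilted a b a
    = (x - a) * (x - b) * (x * (a + b) + a * b) / (a^2 * b^2 * x^2)"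
  using assms by (simp add: inv_sq_tilted_def inv_sq_slope_eq field_simps power2_eq_square)

lemma inv_sq_tilted_ge:
  assumes "0 < a" "a < b" "0 < x" "x \<le> a \<or> b \<le> x"
  shows "inv_sq_tilted a b a \<le> inv_sq_tilted a b x"
proof -
  have "0 \<le> (x - a) * (x - b)"
    using assms(2,4) by (cases "x \<le> a") (auto intro: mult_nonpos_nonpos)
  moreover have "0 < x * (a + b) + a * b" using assms by (intro add_pos_pos mult_pos_pos) auto
  ultimately have "0 \<le> (x - a) * (x - b) * (x * (a + b) + a * b)" by simp
  then have "0 \<le> (x - a) * (x - b) * (x * (a + b) + a * b) / (a^2 * b^2 * x^2)"
    by (rule divide_nonneg_pos) (use assms in simp)
  then show ?thesis using inv_sq_tilted_diff[of a b x] assms by simp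
qed

lemma inv_sq_tilted_gt:
  assumes "0 < a" "a < b" "0 < x" "x < a \<or> b < x"
  shows "inv_sq_tilted a b a < inv_sq_tilted a b x"
proof -
  have "0 < (x - a) * (x - b)"
    using assms(2,4) by (cases "x < a") (auto intro: mult_neg_neg)
  moreover have "0 < x * (a + b) + a * b" using assms by (intro add_pos_pos mult_pos_pos) auto
  ultimately have "0 < (x - a) * (x - b) * (x * (a + b) + a * b)" by simp
  then have "0 < (x - a) * (x - b) * (x * (a + b) + a * b) / (a^2 * b^2 * x^2)"
    by (rule divide_pos_pos) (use assms in simp)
  then show ?thesis using inv_sq_tilted_diff[of a b x] assms by simp
qed

lemma inv_sq_tilted_midpoint_less:
  assumes "1 < c"
  shows "inv_sq_tilted (c - 1) (c + 1) c < inv_sq_tilted (c - 1) (c + 1) (c - 1)"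
proof -
  have slope: "inv_sq_slope (c - 1) (c + 1) = (1 / (c + 1)^2 - 1 / (c - 1)^2) / 2"
    by (simp add: inv_sq_slope_def)
  have "inv_sq_tilted (c - 1) (c + 1) (c - 1) - inv_sq_tilted (c - 1) (c + 1) c
      = 1 / (c - 1)^2 - 1 / c^2 + inv_sq_slope (c - 1) (c + 1)"
    by (simp add: inv_sq_tilted_def algebra_simps)
  also have "\<dots> = (1 / (c - 1)^2 + 1 / (c + 1)^2) / 2 - 1 / c^2"
    unfolding slope by (simp add: field_simps)
  also have "\<dots> = (3 * c^2 - 1) / ((c - 1)^2 * (c + 1)^2 * c^2)"
    using assms by (simp add: divide_simps) algebra
  also have "\<dots> > 0"
  proof -
    have "1 < c^2" using assms by (simp add: one_less_power)
    then have "0 < 3 * c^2 - 1" by linarith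
    then show ?thesis using assms by (intro divide_pos_pos) auto
  qed
  finally show ?thesis by simp
qed

lemma inv_sq_tilted_eq_of_sum_le:
  fixes s t :: "nat \<Rightarrow> nat"
  assumes "0 < a" "a < b"
    and tilted_le:
      "\<And>j. j < k \<Longrightarrow> inv_sq_tilted a b (real (t j)) \<le> inv_sq_tilted a b (real (s j))"
    and sum_le: "(\<Sum>j<k. s j) \<le> (\<Sum>j<k. t j)"
    and inv_sq_le: "(\<Sum>j<k. 1 / real (s j)^2) \<le> (\<Sum>j<k. 1 / real (t j)^2)"
  shows "\<forall>j<k. inv_sq_tilted a b (real (s j)) = inv_sq_tilted a b (real (t j))"
    and "(\<Sum>j<k. s j) = (\<Sum>j<k. t j)"
proof -
  have inv_sq_eq: "(\<Sum>j<k. inv_sq_tilted a b (real (u j)) + inv_sq_slope a b * real (u j))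
      = (\<Sum>j<k. 1 / real (u j)^2)" for u :: "nat \<Rightarrow> nat"
    by (simp add: inv_sq_tilted_def)
  note penalized = penalized_sum_le_imp_eq[where I="{..<k}" and \<mu>="inv_sq_slope a b"
      and f="\<lambda>j. inv_sq_tilted a b (real (s j))" and g="\<lambda>j. inv_sq_tilted a b (real (t j))"
      and x="\<lambda>j. real (s j)" and y="\<lambda>j. real (t j)",
      OF finite_lessThan inv_sq_slope_neg[OF assms(1,2)]]
  have tilted_le':
    "\<forall>j\<in>{..<k}. inv_sq_tilted a b (real (t j)) \<le> inv_sq_tilted a b (real (s j))"
    using tilted_le by simp
  have sum_le': "(\<Sum>j<k. real (s j)) \<le> (\<Sum>j<k. real (t j))"
    using sum_le by (simp only: of_nat_sum[symmetric] of_nat_le_iff)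
  note penalized = penalized[OF tilted_le' sum_le', unfolded inv_sq_eq, OF inv_sq_le]
  from penalized(1) show "\<forall>j<k. inv_sq_tilted a b (real (s j)) = inv_sq_tilted a b (real (t j))"
    by simp
  from penalized(2) show "(\<Sum>j<k. s j) = (\<Sum>j<k. t j)"
    by (simp only: of_nat_sum[symmetric] of_nat_eq_iff)
qed

lemma optimal_pieces_divisible:
  fixes s :: "nat \<Rightarrow> nat" and k m :: nat
  defines "t \<equiv> \<lambda>j::nat. if j = 0 then 2 * m - 1 else 2 * m"
  assumes "1 \<le> k" "1 \<le> m" "0 < s 0"
    and s_even: "\<And>j. j \<in> {1..<k} \<Longrightarrow> even (s j) \<and> 0 < s j"
    and sum_le: "(\<Sum>j<k. s j) \<le> (\<Sum>j<k. t j)"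
    and inv_sq_le: "(\<Sum>j<k. 1 / real (s j)^2) \<le> (\<Sum>j<k. 1 / real (t j)^2)"
  shows "\<forall>j<k. s j = t j"
proof -
  define a b where "a = real (2 * m - 1)" and "b = real (2 * m)"
  have "0 < a" "a < b" using \<open>1 \<le> m\<close> by (auto simp: a_def b_def of_nat_diff)
  have s_pos: "0 < s j" if "j < k" for j
    using s_even[of j] \<open>0 < s 0\<close> that by (cases "j = 0") auto
  have tilted_t: "inv_sq_tilted a b (real (t j)) = inv_sq_tilted a b a" for j
    using inv_sq_tilted_right_eq_left[of a b] \<open>a < b\<close> by (simp add: t_def a_def b_def)
  have "real x \<le> a \<or> b \<le> real x" for x
    unfolding a_def b_def of_nat_le_iff by linarith
  then have "inv_sq_tilted a b a \<le> inv_sq_tilted a b (real (s j))" if "j < k" for j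
    using inv_sq_tilted_ge \<open>0 < a\<close> \<open>a < b\<close> s_pos[OF that] by simp
  with tilted_t have "\<forall>j<k. inv_sq_tilted a b (real (s j)) = inv_sq_tilted a b (real (t j))"
    and sum_eq: "(\<Sum>j<k. s j) = (\<Sum>j<k. t j)"
    using inv_sq_tilted_eq_of_sum_le[OF \<open>0 < a\<close> \<open>a < b\<close> _ sum_le inv_sq_le] by auto
  then have "s j = 2 * m - 1 \<or> s j = 2 * m" if "j < k" for j
    using inv_sq_tilted_gt[OF \<open>0 < a\<close> \<open>a < b\<close>, of "real (s j)"] s_pos[OF that] that tilted_t
    unfolding a_def b_def by (force simp: of_nat_less_iff)
  then have s_tail: "s j = t j" if "j \<in> {1..<k}" for j
    using s_even[OF that] \<open>1 \<le> m\<close> that by (force simp: t_def)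
  then have "(\<Sum>j\<in>{1..<k}. s j) = (\<Sum>j\<in>{1..<k}. t j)" by (rule sum.cong[OF refl])
  then have "s 0 = t 0"
    using sum_eq sum_lessThan_split_first[OF \<open>1 \<le> k\<close>] by (metis add_right_cancel)
  with s_tail show ?thesis by (metis atLeastLessThan_iff less_one not_le)
qed

lemma sum_two_valued:
  fixes u :: "'i \<Rightarrow> nat"
  assumes "finite I" "\<forall>i\<in>I. u i = p \<or> u i = p + 2"
  shows "sum u I = p * card I + 2 * card {i\<in>I. u i = p + 2}"
proof -
  have "sum u I = (\<Sum>i\<in>I. p + (if u i = p + 2 then 2 else 0))"
    using assms(2) by (intro sum.cong) auto
  also have "\<dots> = p * card I + 2 * card {i\<in>I. u i = p + 2}"
    using assms(1) by (simp add: sum.distrib sum.If_cases Int_def)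
  finally show ?thesis .
qed

lemma inv_sq_tilted_around_odd:
  fixes m x :: nat
  defines "A \<equiv> inv_sq_tilted (real (2 * m)) (real (2 * m + 2))"
  assumes "1 \<le> m" "0 < x"
  shows "x \<noteq> 2 * m + 1 \<Longrightarrow> A (real (2 * m + 1)) < A (real x)"
    and "even x \<Longrightarrow> A (real (2 * m)) \<le> A (real x)"
    and "even x \<Longrightarrow> x \<noteq> 2 * m \<Longrightarrow> x \<noteq> 2 * m + 2 \<Longrightarrow> A (real (2 * m)) < A (real x)"
proof -
  have ab: "0 < real (2 * m)" "real (2 * m) < real (2 * m + 2)" using assms(2) by auto
  have ge: "A (real (2 * m)) \<le> A (real x)" if "x \<noteq> 2 * m + 1"
    unfolding A_def using that assms(3) by (intro inv_sq_tilted_ge[OF ab]) auto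
  have "A (real (2 * m + 1)) < A (real (2 * m))"
    using inv_sq_tilted_midpoint_less[of "real (2 * m + 1)"] assms(2) by (simp add: A_def)
  with ge show "x \<noteq> 2 * m + 1 \<Longrightarrow> A (real (2 * m + 1)) < A (real x)" by fastforce
  show "A (real (2 * m)) \<le> A (real x)" if "even x"
  proof -
    have "x \<noteq> 2 * m + 1" using that by presburger
    then show ?thesis by (rule ge)
  qed
  show "even x \<Longrightarrow> x \<noteq> 2 * m \<Longrightarrow> x \<noteq> 2 * m + 2 \<Longrightarrow> A (real (2 * m)) < A (real x)"
    unfolding A_def using assms(3) by (intro inv_sq_tilted_gt[OF ab]) auto
qed

lemma optimal_pieces_remainder:
  fixes s :: "nat \<Rightarrow> nat" and k l m :: nat
  defines "t \<equiv> \<lambda>j::nat. if j = 0 then 2 * m + 1 else if j < l then 2 * m + 2 else 2 * m"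
  assumes "1 \<le> l" "l \<le> k" "1 \<le> m" "0 < s 0"
    and s_even: "\<And>j. j \<in> {1..<k} \<Longrightarrow> even (s j) \<and> 0 < s j"
    and sum_le: "(\<Sum>j<k. s j) \<le> (\<Sum>j<k. t j)"
    and inv_sq_le: "(\<Sum>j<k. 1 / real (s j)^2) \<le> (\<Sum>j<k. 1 / real (t j)^2)"
  shows "s 0 = 2 * m + 1" and "\<forall>j\<in>{1..<k}. s j = 2 * m \<or> s j = 2 * m + 2"
    and "card {j\<in>{1..<k}. s j = 2 * m + 2} = l - 1"
proof -
  define A where "A = inv_sq_tilted (real (2 * m)) (real (2 * m + 2))"
  note bounds = inv_sq_tilted_around_odd[OF \<open>1 \<le> m\<close>, folded A_def]
  have "0 < k" using \<open>1 \<le> l\<close> \<open>l \<le> k\<close> by simp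
  have A_t: "A (real (t j)) = (if j = 0 then A (real (2 * m + 1)) else A (real (2 * m)))" for j
    using inv_sq_tilted_right_eq_left[of "real (2 * m)" "real (2 * m + 2)"]
    by (simp add: t_def A_def)
  have "A (real (t j)) \<le> A (real (s j))" if "j < k" for j
  proof (cases "j = 0")
    case True
    then show ?thesis
      using bounds(1)[OF \<open>0 < s 0\<close>] A_t by (cases "s 0 = 2 * m + 1") (auto intro: less_imp_le)
  next
    case False
    then show ?thesis using bounds(2)[of "s j"] s_even[of j] that A_t by simp
  qed
  then have A_eq: "\<forall>j<k. A (real (s j)) = A (real (t j))"
    and sum_eq: "(\<Sum>j<k. s j) = (\<Sum>j<k. t j)"
    using inv_sq_tilted_eq_of_sum_le[of "real (2 * m)" "real (2 * m + 2)" k t s] sum_le inv_sq_le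
      \<open>1 \<le> m\<close> by (auto simp: A_def)
  show s0: "s 0 = 2 * m + 1"
  proof (rule ccontr)
    assume "s 0 \<noteq> 2 * m + 1"
    then have "A (real (t 0)) < A (real (s 0))" using bounds(1)[OF \<open>0 < s 0\<close>] A_t by simp
    then show False using A_eq \<open>0 < k\<close> by simp
  qed
  show s_tail: "\<forall>j\<in>{1..<k}. s j = 2 * m \<or> s j = 2 * m + 2"
  proof (rule ballI, rule ccontr)
    fix j assume j: "j \<in> {1..<k}" and "\<not> (s j = 2 * m \<or> s j = 2 * m + 2)"
    then have "A (real (t j)) < A (real (s j))" using bounds(3) s_even[OF j] A_t by simp
    then show False using A_eq j by simp
  qed
  have t_tail: "\<forall>j\<in>{1..<k}. t j = 2 * m \<or> t j = 2 * m + 2" by (simp add: t_def)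
  have "(\<Sum>j\<in>{1..<k}. s j) = (\<Sum>j\<in>{1..<k}. t j)"
    using sum_eq sum_lessThan_split_first[of k s] sum_lessThan_split_first[of k t] \<open>0 < k\<close> s0
    by (simp add: t_def)
  then have "card {j\<in>{1..<k}. s j = 2 * m + 2} = card {j\<in>{1..<k}. t j = 2 * m + 2}"
    using sum_two_valued[OF _ s_tail] sum_two_valued[OF _ t_tail] by simp
  also have "{j\<in>{1..<k}. t j = 2 * m + 2} = {1..<l}"
    using \<open>l \<le> k\<close> by (auto simp: t_def)
  finally show "card {j\<in>{1..<k}. s j = 2 * m + 2} = l - 1" by simp
qed

section \<open>Conditional optimal sets for the grid\<close>

lemma cond_optimal_set_unif01_grid:
  assumes "cond_optimal_set unif01 (grid k) n G"
  shows "finite G" "grid k \<subseteq> G" "card G \<le> n"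
    and "distortion unif01 G = cond_quant_error unif01 (grid k) n"
proof -
  obtain \<alpha> where "finite \<alpha>" "card \<alpha> \<le> n - k" "G = \<alpha> \<union> grid k" "k \<le> n"
    and "distortion unif01 G = cond_quant_error unif01 (grid k) n"
    using assms by (auto simp: cond_optimal_set_def card_grid)
  moreover have "card G \<le> card \<alpha> + k"
    using \<open>G = \<alpha> \<union> grid k\<close> card_Un_le[of \<alpha> "grid k"] by (simp add: card_grid)
  ultimately show "finite G" "grid k \<subseteq> G" "card G \<le> n"
    and "distortion unif01 G = cond_quant_error unif01 (grid k) n"
    by (auto simp: finite_grid)
qed

lemma grid_pieces_inner:
  assumes "grid k \<subseteq> G" "j \<in> {1..<k}"
  shows "grid_pieces G k j = 2 * card (G \<inter> {real j / real k<..<real (Suc j) / real k}) + 2"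
  using assms in_grid[of j k] by (auto simp: grid_pieces_def cell_pieces_def)

lemma card_inter_Jkj:
  assumes "finite G" "grid k \<subseteq> G" "j \<in> {2..k}"
  shows "card (G \<inter> Jkj k j) = grid_pieces G k (j - 1) div 2 + 1"
proof -
  obtain i where i: "j = Suc i" "i \<in> {1..<k}" using assms(3) by (cases j) auto
  then have "real i / real k < real j / real k" by (simp add: divide_strict_right_mono)
  then have "G \<inter> Jkj k j = insert (real i / real k) (insert (real j / real k)
      (G \<inter> {real i / real k<..<real j / real k}))"
    using assms i in_grid[of i k] in_grid[of j k] by (auto simp: Jkj_def)
  then show ?thesis
    using assms i \<open>real i / real k < real j / real k\<close> by (simp add: grid_pieces_inner)
qed

lemma card_inter_Jkj_one:
  assumes "finite G" "grid k \<subseteq> G" "1 \<le> k" "odd (grid_pieces G k 0)"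
  shows "card (G \<inter> Jkj k 1) = grid_pieces G k 0 div 2 + 1"
proof -
  have "\<not> (\<exists>a\<in>G. a \<le> 0)"
    using assms(4) by (auto simp: grid_pieces_def cell_pieces_def split: if_splits)
  then have "G \<inter> Jkj k 1 = insert (1 / real k) (G \<inter> {0<..<1 / real k})"
    using assms in_grid[of 1 k] by (auto simp: Jkj_def)
  moreover have "grid_pieces G k 0 = 2 * card (G \<inter> {0<..<1 / real k}) + 1"
    using \<open>\<not> (\<exists>a\<in>G. a \<le> 0)\<close> by (simp add: grid_pieces_def cell_pieces_def)
  ultimately show ?thesis using assms(1) by simp
qed

lemma cond_optimal_set_grid_pieces:
  assumes "1 \<le> k" "k \<le> n" "cond_optimal_set unif01 (grid k) n G"
  shows "0 < grid_pieces G k 0"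
    and "\<And>j. j \<in> {1..<k} \<Longrightarrow> even (grid_pieces G k j) \<and> 0 < grid_pieces G k j"
    and "(\<Sum>j<k. grid_pieces G k j) < 2 * n"
    and "\<And>t. odd (t 0) \<Longrightarrow> (\<And>j. j \<in> {1..<k} \<Longrightarrow> even (t j) \<and> 0 < t j) \<Longrightarrow>
      (\<Sum>j<k. t j) < 2 * n \<Longrightarrow>
      (\<Sum>j<k. 1 / real (grid_pieces G k j)^2) \<le> (\<Sum>j<k. 1 / real (t j)^2)"
proof -
  note G = cond_optimal_set_unif01_grid[OF assms(3)]
  show "0 < grid_pieces G k 0" by (simp add: grid_pieces_def cell_pieces_def)
  show "even (grid_pieces G k j) \<and> 0 < grid_pieces G k j" if "j \<in> {1..<k}" for j
    using grid_pieces_inner[OF G(2) that] by simp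
  show "(\<Sum>j<k. grid_pieces G k j) < 2 * n"
    using sum_grid_pieces_less[OF assms(1) G(1,2)] G(3) by simp
  fix t :: "nat \<Rightarrow> nat"
  assume "odd (t 0)" "\<And>j. j \<in> {1..<k} \<Longrightarrow> even (t j) \<and> 0 < t j" "(\<Sum>j<k. t j) < 2 * n"
  have "(\<Sum>j<k. 1 / real (grid_pieces G k j)^2) / (3 * real k^3) \<le> distortion unif01 G"
    using distortion_unif01_ge_grid_pieces[OF assms(1) G(1,2)] .
  also have "\<dots> \<le> (\<Sum>j<k. 1 / real (t j)^2) / (3 * real k^3)"
    unfolding G(4) by (rule cond_quant_error_unif01_grid_le) fact+
  finally show "(\<Sum>j<k. 1 / real (grid_pieces G k j)^2) \<le> (\<Sum>j<k. 1 / real (t j)^2)"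
    using assms(1) by (simp add: divide_le_cancel)
qed

lemma cond_optimal_set_cards_divisible:
  assumes "1 \<le> k" "1 \<le> m" "cond_optimal_set unif01 (grid k) (m * k) G"
  shows "card (G \<inter> Jkj k 1) = m" and "\<forall>j\<in>{2..k}. card (G \<inter> Jkj k j) = m + 1"
proof -
  note G = cond_optimal_set_unif01_grid[OF assms(3)]
  define s where "s = grid_pieces G k"
  define t where "t = (\<lambda>j::nat. if j = 0 then 2 * m - 1 else 2 * m)"
  have "k \<le> m * k" using assms by simp
  note s = cond_optimal_set_grid_pieces[OF assms(1) this assms(3), folded s_def]
  have sum_t: "(\<Sum>j<k. t j) = 2 * (m * k) - 1"
    using sum_lessThan_split_first[OF \<open>1 \<le> k\<close>, of t] assms(1,2)
    by (cases k) (auto simp: t_def algebra_simps)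
  have "(\<Sum>j<k. 1 / real (s j)^2) \<le> (\<Sum>j<k. 1 / real (t j)^2)"
    using assms(1,2) sum_t by (intro s(4)) (auto simp: t_def)
  then have s_eq: "\<forall>j<k. s j = t j"
    using optimal_pieces_divisible[where s = s, OF assms(1,2) s(1,2)] s(3) sum_t
    unfolding t_def by simp
  then have "odd (s 0)" using assms by (simp add: t_def)
  with s_eq show "card (G \<inter> Jkj k 1) = m"
    using card_inter_Jkj_one[OF G(1,2) \<open>1 \<le> k\<close>] assms by (simp add: s_def t_def)
  show "\<forall>j\<in>{2..k}. card (G \<inter> Jkj k j) = m + 1"
    using card_inter_Jkj[OF G(1,2)] s_eq by (auto simp: s_def t_def)
qed

lemma cond_optimal_set_cards_remainder:
  assumes "1 \<le> l" "l < k" "1 \<le> m" "cond_optimal_set unif01 (grid k) (m * k + l) G"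
  shows "\<exists>J. J \<subseteq> {2..k} \<and> card J = l - 1 \<and> card (G \<inter> Jkj k 1) = m + 1
    \<and> (\<forall>j\<in>J. card (G \<inter> Jkj k j) = m + 2)
    \<and> (\<forall>j\<in>{2..k} - J. card (G \<inter> Jkj k j) = m + 1)"
proof -
  note G = cond_optimal_set_unif01_grid[OF assms(4)]
  define s where "s = grid_pieces G k"
  define t where "t = (\<lambda>j::nat. if j = 0 then 2 * m + 1 else if j < l then 2 * m + 2 else 2 * m)"
  have "1 \<le> k" using assms by simp
  have "k \<le> m * k + l" using \<open>1 \<le> m\<close> by (simp add: trans_le_add1)
  note s = cond_optimal_set_grid_pieces[OF \<open>1 \<le> k\<close> this assms(4), folded s_def]
  have "{j\<in>{1..<k}. t j = 2 * m + 2} = {1..<l}" using assms(2) by (auto simp: t_def)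
  then have "(\<Sum>j\<in>{1..<k}. t j) = 2 * m * (k - 1) + 2 * (l - 1)"
    using sum_two_valued[of "{1..<k}" t "2 * m"] by (simp add: t_def)
  then have sum_t: "(\<Sum>j<k. t j) = 2 * (m * k + l) - 1"
    using sum_lessThan_split_first[OF \<open>1 \<le> k\<close>, of t] assms(1,2)
    by (cases k; cases l) (auto simp: t_def algebra_simps)
  have "(\<Sum>j<k. 1 / real (s j)^2) \<le> (\<Sum>j<k. 1 / real (t j)^2)"
    using assms(1,3) sum_t by (intro s(4)) (auto simp: t_def)
  then have "s 0 = 2 * m + 1" and s_inner: "\<forall>j\<in>{1..<k}. s j = 2 * m \<or> s j = 2 * m + 2"
    and card_big: "card {j\<in>{1..<k}. s j = 2 * m + 2} = l - 1"
    using optimal_pieces_remainder[where s = s, OF assms(1) less_imp_le[OF assms(2)] assms(3)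
        s(1,2)] s(3) sum_t
    unfolding t_def by simp_all
  define J where "J = Suc ` {j\<in>{1..<k}. s j = 2 * m + 2}"
  note card_J = card_inter_Jkj[OF G(1,2), folded s_def]
  have "J \<subseteq> {2..k}" by (auto simp: J_def)
  moreover have "card J = l - 1" using card_big by (simp add: J_def card_image)
  moreover have "card (G \<inter> Jkj k 1) = m + 1"
    using card_inter_Jkj_one[OF G(1,2) \<open>1 \<le> k\<close>] \<open>s 0 = 2 * m + 1\<close> by (simp add: s_def)
  moreover have "\<forall>j\<in>J. card (G \<inter> Jkj k j) = m + 2"
    using card_J by (auto simp: J_def)
  moreover have "\<forall>j\<in>{2..k} - J. card (G \<inter> Jkj k j) = m + 1"
  proof
    fix j assume j: "j \<in> {2..k} - J"
    then have "j - 1 \<in> {1..<k}" "Suc (j - 1) \<notin> J" by auto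
    then have "s (j - 1) = 2 * m" using s_inner by (auto simp: J_def)
    then show "card (G \<inter> Jkj k j) = m + 1" using card_J j by simp
  qed
  ultimately show ?thesis by blast
qed

theorem theorem4p4:
  fixes k n m l :: nat and \<alpha>n :: "real set"
  assumes "k \<ge> 1"
    and "n \<ge> k"
    and "n = m * k + l"
    and "l < k"
    and "cond_optimal_set unif01 {real j / real k | j. 1 \<le> j \<and> j \<le> k} n \<alpha>n"
  shows "(l = 0 \<longrightarrow>
            card (\<alpha>n \<inter> Jkj k 1) = m \<and>
            (\<forall>j\<in>{2..k}. card (\<alpha>n \<inter> Jkj k j) = m + 1))
       \<and> (1 \<le> l \<longrightarrow>
            (\<exists>J. J \<subseteq> {2..k} \<and> card J = l - 1 \<and>
                 card (\<alpha>n \<inter> Jkj k 1) = m + 1 \<and>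
                 (\<forall>j\<in>J. card (\<alpha>n \<inter> Jkj k j) = m + 2) \<and>
                 (\<forall>j\<in>{2..k} - J. card (\<alpha>n \<inter> Jkj k j) = m + 1)))"
proof -
  have optimal: "cond_optimal_set unif01 (grid k) (m * k + l) \<alpha>n"
    using assms(3,5) by (simp add: grid_def)
  have "1 \<le> m" using assms(2-4) by (cases m) auto
  show ?thesis
    using cond_optimal_set_cards_divisible[OF assms(1) \<open>1 \<le> m\<close>, of \<alpha>n]
      cond_optimal_set_cards_remainder[OF _ assms(4) \<open>1 \<le> m\<close> optimal] optimal by auto
qed

end
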